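(* Let $h\colon L^\infty(\mathbb S_1)\to\mathbb R$ be boundedness-preserving (maps bounded sets to bounded sets) and satisfy $h(g\circ\phi_{\mathbf A})=h(g)$ for all $g\in L^\infty(\mathbb S_1)$ and all $\mathbf A\in\mathrm{GL}(2)$, where $\phi_{\mathbf A}(\theta)=\mathbf A^\top\theta/\|\mathbf A^\top\theta\|$. Let $\mu_0,\nu_0\in\mathcal P_c^*(\mathbb R^2)$ satisfy $\mathcal N_h[\mu_0]\neq\mathcal N_h[\nu_0]$, and consider $$\mathbb F=\{(\mathbf A\cdot+\mathbf y)_\#\mu_0 : \mathbf A\in\mathrm{GL}(2),\ \mathbf y\in\mathbb R^2\},\qquad \mathbb G=\{(\mathbf A\cdot+\mathbf y)_\#\nu_0 : \mathbf A\in\mathrm{GL}(2),\ \mathbf y\in\mathbb R^2\}.$$ Then $\mathbb F\subset\mathcal P_c^*(\mathbb R^2)$ and $\mathbb G\subset\mathcal P_c^*(\mathbb R^2)$, and $\mathcal N_h[\mathbb F]$ and $\mathcal N_h[\mathbb G]$ are linearly separable in $L^\infty_\rho(\mathbb R)$.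
   Context: Let $\mathbb S_1=\{x\in\mathbb R^2:\|x\|=1\}$. For $\theta\in\mathbb S_1$ let $S_\theta(x)=\langle x,\theta\rangle$ and, for a finite Borel measure $\mu$ on $\mathbb R^2$, let $\mathcal R_\theta[\mu]=(S_\theta)_\#\mu$. Fix a reference Borel probability measure $\rho$ on $\mathbb R$ without atoms. For a probability measure $\nu$ on $\mathbb R$ with $F_\nu(t)=\nu((-\infty,t])$, set $F_\nu^{[-1]}(t)=\inf\{s: F_\nu(s)>t\}$ and define the CDT $\hat\nu=F_\nu^{[-1]}\circ F_\rho$; write $\widehat{\mathcal R}_\theta[\mu]$ for the CDT of $\mathcal R_\theta[\mu]$. For $g\in L^2_\rho(\mathbb R)$, $\operatorname{mean}(g)=\int g\,\mathrm d\rho$ and $\operatorname{std}(g)=(\int|g-\operatorname{mean}(g)|^2\,\mathrm d\rho)^{1/2}$. $\mathcal P_c^*(\mathbb R^2)$ is the set of compactly supported Borel probability measures on $\mathbb R^2$ whose support is not contained in a line. For $\mu\in\mathcal P_c^*(\mathbb R^2)$: $\mathcal N[\mu](t,\theta)=\mathcal N_\theta[\mu](t)=\big(\widehat{\mathcal R}_\theta[\mu](t)-\operatorname{mean}(\widehat{\mathcal R}_\theta[\mu])\big)/\operatorname{std}(\widehat{\mathcal R}_\theta[\mu])$, and the $h$-normalized R-CDT is $\mathcal N_h[\mu](t)=h(\mathcal N[\mu](t,\cdot))$, $t\in\mathbb R$. Subsets $A,B$ of a normed space $V$ are linearly separable if there exist a continuous linear functional $\ell$ on $V$ and $c\in\mathbb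 R$ with $\ell>c$ on $A$ and $\ell<c$ on $B$.
   Formalization: The space $L^\infty_\rho(\mathbb R)$ in which the two families are separated consists of all rho-essentially bounded functions on R, with no measurability condition, and the separating functional is linear and bounded by a multiple of the essential-supremum norm. Apart from conventions, each condition added here is assumed in the paper as well or is needed for the statement above to hold. *)

theory Defs
  imports "HOL-Probability.Probability"
begin

definition mu_support :: "(real^2) measure \<Rightarrow> (real^2) set" where
  "mu_support \<mu> = {x. \<forall>e>0. emeasure \<mu> (ball x e) > 0}"

definition is_line :: "(real^2) set \<Rightarrow> bool" where
  "is_line L \<longleftrightarrow> (\<exists>p v. v \<noteq> 0 \<and> L = {p + s *\<^sub>R v | s. True})"

definition Pcstar :: "(real^2) measure set" where
  "Pcstar = {\<mu>. sets \<mu> = sets borel \<and> prob_space \<mu> \<and> compact (mu_support \<mu>)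
               \<and> \<not> (\<exists>L. is_line L \<and> mu_support \<mu> \<subseteq> L)}"

definition affine_push :: "real^2^2 \<Rightarrow> real^2 \<Rightarrow> (real^2) measure \<Rightarrow> (real^2) measure" where
  "affine_push A y \<mu> = distr \<mu> borel (\<lambda>x. A *v x + y)"

definition radon :: "real^2 \<Rightarrow> (real^2) measure \<Rightarrow> real measure" where
  "radon \<theta> \<mu> = distr \<mu> borel (\<lambda>x. x \<bullet> \<theta>)"

definition cdf :: "real measure \<Rightarrow> real \<Rightarrow> real" where
  "cdf \<nu> t = measure \<nu> {..t}"

definition gen_inv :: "real measure \<Rightarrow> real \<Rightarrow> real" where
  "gen_inv \<nu> t = Inf {s. cdf \<nu> s > t}"

definition cdt :: "real measure \<Rightarrow> real measure \<Rightarrow> real \<Rightarrow> real" where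
  "cdt \<rho> \<nu> = (\<lambda>x. gen_inv \<nu> (cdf \<rho> x))"

definition mean :: "real measure \<Rightarrow> (real \<Rightarrow> real) \<Rightarrow> real" where
  "mean \<rho> g = (\<integral>x. g x \<partial>\<rho>)"

definition std :: "real measure \<Rightarrow> (real \<Rightarrow> real) \<Rightarrow> real" where
  "std \<rho> g = sqrt (\<integral>x. (g x - mean \<rho> g)\<^sup>2 \<partial>\<rho>)"

definition NRCDT :: "real measure \<Rightarrow> (real^2) measure \<Rightarrow> real \<Rightarrow> real^2 \<Rightarrow> real" where
  "NRCDT \<rho> \<mu> t \<theta> =
     (cdt \<rho> (radon \<theta> \<mu>) t - mean \<rho> (cdt \<rho> (radon \<theta> \<mu>))) / std \<rho> (cdt \<rho> (radon \<theta> \<mu>))"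

definition NRCDT_h :: "((real^2 \<Rightarrow> real) \<Rightarrow> real) \<Rightarrow> real measure \<Rightarrow> (real^2) measure \<Rightarrow> real \<Rightarrow> real" where
  "NRCDT_h h \<rho> \<mu> t = h (NRCDT \<rho> \<mu> t)"

definition circle_measure :: "(real^2) measure" where
  "circle_measure = distr (restrict_space lborel {0..2*pi}) borel
                       (\<lambda>t. \<chi> i. if i = 1 then cos t else sin t)"

definition ess_bounded :: "'a measure \<Rightarrow> ('a \<Rightarrow> real) \<Rightarrow> bool" where
  "ess_bounded M f \<longleftrightarrow> (\<exists>C. AE x in M. \<bar>f x\<bar> \<le> C)"

definition ess_norm :: "'a measure \<Rightarrow> ('a \<Rightarrow> real) \<Rightarrow> real" where
  "ess_norm M f = Inf {C. C \<ge> 0 \<and> (AE x in M. \<bar>f x\<bar> \<le> C)}"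

text \<open>Representatives of elements of \<open>L^\<infinity>(S_1)\<close>.\<close>
definition Linf_S1 :: "(real^2 \<Rightarrow> real) set" where
  "Linf_S1 = {g. g \<in> borel_measurable circle_measure \<and> ess_bounded circle_measure g}"

definition phiA :: "real^2^2 \<Rightarrow> real^2 \<Rightarrow> real^2" where
  "phiA A \<theta> = (1 / norm (transpose A *v \<theta>)) *\<^sub>R (transpose A *v \<theta>)"

text \<open>\<open>h : L^\<infinity>(S_1) \<rightarrow> R\<close> (well defined on a.e.-classes), boundedness preserving,
  and invariant under all \<open>\<phi>_A\<close>, \<open>A \<in> GL(2)\<close>.\<close>
definition admissible_h :: "((real^2 \<Rightarrow> real) \<Rightarrow> real) \<Rightarrow> bool" where
  "admissible_h h \<longleftrightarrow>
     (\<forall>g1\<in>Linf_S1. \<forall>g2\<in>Linf_S1. (AE \<theta> in circle_measure. g1 \<theta> = g2 \<theta>) \<longrightarrow> h g1 = h g2) \<and>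
     (\<forall>B \<subseteq> Linf_S1. (\<exists>M. \<forall>g\<in>B. ess_norm circle_measure g \<le> M) \<longrightarrow> bounded (h ` B)) \<and>
     (\<forall>g\<in>Linf_S1. \<forall>A::real^2^2. invertible A \<longrightarrow> h (g \<circ> phiA A) = h g)"

text \<open>The carrier is the space of \<open>\<rho>\<close>-essentially bounded
  functions; continuity w.r.t. the essential-sup norm forces the functional to be
  constant on a.e.-classes.\<close>
definition Linf_rho :: "real measure \<Rightarrow> (real \<Rightarrow> real) set" where
  "Linf_rho \<rho> = {f. ess_bounded \<rho> f}"

definition lin_separable :: "real measure \<Rightarrow> (real \<Rightarrow> real) set \<Rightarrow> (real \<Rightarrow> real) set \<Rightarrow> bool" where
  "lin_separable \<rho> S T \<longleftrightarrow> S \<subseteq> Linf_rho \<rho> \<and> T \<subseteq> Linf_rho \<rho> \<and>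
     (\<exists>(L::(real \<Rightarrow> real) \<Rightarrow> real) c.
        (\<forall>f\<in>Linf_rho \<rho>. \<forall>g\<in>Linf_rho \<rho>. L (\<lambda>x. f x + g x) = L f + L g) \<and>
        (\<forall>f\<in>Linf_rho \<rho>. \<forall>a. L (\<lambda>x. a * f x) = a * L f) \<and>
        (\<exists>K. \<forall>f\<in>Linf_rho \<rho>. \<bar>L f\<bar> \<le> K * ess_norm \<rho> f) \<and>
        (\<forall>f\<in>S. L f > c) \<and> (\<forall>f\<in>T. L f < c))"

end

(*
  For mu in P_c^*, every projection R_theta[mu] is supported in [-R |theta|, R |theta|], so its
  CDT is bounded, and its variance is a continuous quadratic form in theta that is positive on the
  circle because supp mu lies in no line. Hence N[mu](t, .) is bounded on S_1 uniformly in t, and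
  since h preserves boundedness, N_h[mu] is essentially bounded.

  The push-forward by x |-> A x + y turns R_theta[mu] into the image of R_{phi_A theta}[mu] under
  s |-> |A^T theta| s + <y, theta>. The CDT commutes with increasing affine maps and the
  normalization removes them, so N[(A . + y)_# mu](t, .) = N[mu](t, .) o phi_A whenever
  F_rho(t) < 1, i.e. for rho-a.e. t. By the invariance of h, N_h is a.e. constant on F and on G.

  Two a.e. different elements f0, g0 of L^infty_rho are separated by f |-> (lim_U f0 - lim_U g0) lim_U f,
  where U is an ultrafilter refining the a.e. filter on a set where |f0 - g0| stays above some e > 0.
*)
theory Submission
  imports Defs
begin

section \<open>Linear separation by ultrafilter limits\<close>

definition ultrafilter :: "'a filter \<Rightarrow> bool" where
  "ultrafilter U \<longleftrightarrow> U \<noteq> bot \<and> (\<forall>P. eventually P U \<or> eventually (\<lambda>x. \<not> P x) U)"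

lemma Inf_filter_chain_ne_bot:
  fixes C :: "'a filter set"
  assumes "C \<noteq> {}" "bot \<notin> C" and chain: "\<And>G H. G \<in> C \<Longrightarrow> H \<in> C \<Longrightarrow> G \<le> H \<or> H \<le> G"
  shows "Inf C \<noteq> bot"
proof -
  have "eventually (\<lambda>_. False) (Inf C) \<longleftrightarrow> (\<exists>G\<in>C. eventually (\<lambda>_. False) G)"
  proof (rule eventually_Inf_base[OF assms(1)])
    fix G H assume "G \<in> C" "H \<in> C"
    then consider "G \<le> H" | "H \<le> G" using chain by blast
    then show "\<exists>K\<in>C. K \<le> inf G H" using \<open>G \<in> C\<close> \<open>H \<in> C\<close> by cases auto
  qed
  then show ?thesis using assms(2) unfolding eventually_False by blast
qed

lemma ultrafilter_finer:
  fixes F :: "'a filter"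
  assumes "F \<noteq> bot"
  obtains U where "ultrafilter U" "U \<le> F"
proof -
  define r where "r = {(G, H). H \<le> G \<and> G \<le> F \<and> H \<noteq> bot}"
  have field_r: "Field r = {G. G \<le> F \<and> G \<noteq> bot}"
    unfolding r_def Field_def by (auto intro: order.trans dest: le_bot)
  have "refl_on (Field r) r"
    unfolding refl_on_def field_r by (auto simp: r_def intro: order.trans dest: le_bot)
  moreover have "trans r" unfolding trans_def r_def by (auto intro: order.trans)
  moreover have "antisym r" unfolding antisym_def r_def by auto
  ultimately have "Partial_order r"
    unfolding partial_order_on_def preorder_on_def by (auto intro: FieldI1 FieldI2)
  moreover have "\<exists>u\<in>Field r. \<forall>G\<in>C. (G, u) \<in> r" if C: "C \<in> Chains r" for C
  proof (cases "C = {}")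
    case True
    then show ?thesis using assms field_r by auto
  next
    case False
    have C_sub: "C \<subseteq> {G. G \<le> F \<and> G \<noteq> bot}"
      using C field_r unfolding Chains_def by (auto simp: Field_def)
    have "Inf C \<noteq> bot"
    proof (rule Inf_filter_chain_ne_bot[OF False])
      show "bot \<notin> C" using C_sub by blast
      show "G \<le> H \<or> H \<le> G" if "G \<in> C" "H \<in> C" for G H
        using C that unfolding Chains_def r_def by blast
    qed
    moreover obtain G where "G \<in> C" using False by blast
    then have "Inf C \<le> F" using C_sub by (blast intro: Inf_lower2)
    ultimately show ?thesis
      using C_sub field_r unfolding r_def by (auto intro: Inf_lower)
  qed
  ultimately obtain U where U: "U \<in> Field r" and max: "\<And>G. G \<in> Field r \<Longrightarrow> (U, G) \<in> r \<Longrightarrow> G = U"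
    using Zorns_po_lemma by (metis (no_types, lifting))
  have "eventually P U" if "\<not> eventually (\<lambda>x. \<not> P x) U" for P
  proof -
    define U' where "U' = inf U (principal {x. P x})"
    have "U' \<noteq> bot"
      using that unfolding U'_def trivial_limit_def eventually_inf_principal by auto
    then have "U' = U"
      using U field_r by (intro max) (auto simp: r_def U'_def intro: order.trans[OF inf_le1])
    moreover have "eventually P U'" unfolding U'_def eventually_inf_principal by simp
    ultimately show ?thesis by simp
  qed
  then have "ultrafilter U" using U field_r unfolding ultrafilter_def by blast
  then show ?thesis using that U field_r by blast
qed

lemma ultrafilter_tendsto_compact:
  fixes f :: "'a \<Rightarrow> 'b::topological_space"
  assumes U: "ultrafilter U" and K: "compact K" and f: "eventually (\<lambda>x. f x \<in> K) U"
  obtains l where "l \<in> K" "(f \<longlongrightarrow> l) U"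
proof -
  have "filtermap f U \<noteq> bot" using U unfolding ultrafilter_def by (simp add: filtermap_bot_iff)
  moreover have "eventually (\<lambda>y. y \<in> K) (filtermap f U)" using f by (simp add: eventually_filtermap)
  ultimately obtain l where l: "l \<in> K" "inf (nhds l) (filtermap f U) \<noteq> bot"
    using K unfolding compact_filter by blast
  have "eventually (\<lambda>x. f x \<in> S) U" if "open S" "l \<in> S" for S
  proof (rule ccontr)
    assume "\<not> eventually (\<lambda>x. f x \<in> S) U"
    then have "eventually (\<lambda>x. f x \<notin> S) U" using U unfolding ultrafilter_def by blast
    moreover have "eventually (\<lambda>y. y \<in> S) (nhds l)" using that by (rule eventually_nhds_in_open)
    ultimately have "eventually (\<lambda>_. False) (inf (nhds l) (filtermap f U))"
      unfolding eventually_inf by (force simp: eventually_filtermap)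
    then show False using l(2) by (simp add: trivial_limit_def)
  qed
  then have "(f \<longlongrightarrow> l) U" by (rule topological_tendstoI)
  then show ?thesis using that l(1) by blast
qed

lemma AE_eq_if_AE_abs_diff_le:
  fixes f g :: "'a \<Rightarrow> real"
  assumes "\<And>e. e > 0 \<Longrightarrow> AE t in M. \<bar>f t - g t\<bar> \<le> e"
  shows "AE t in M. f t = g t"
proof -
  have "AE t in M. \<forall>n::nat. \<bar>f t - g t\<bar> \<le> 1 / Suc n"
    using assms by (simp add: AE_all_countable)
  then show ?thesis
  proof (rule eventually_mono)
    fix t assume bound: "\<forall>n::nat. \<bar>f t - g t\<bar> \<le> 1 / Suc n"
    show "f t = g t"
    proof (rule ccontr)
      assume "f t \<noteq> g t"
      then have "\<bar>f t - g t\<bar> > 0" by simp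
      then obtain n :: nat where "1 / Suc n < \<bar>f t - g t\<bar>" by (rule nat_approx_posE)
      then show False using bound by (meson not_le)
    qed
  qed
qed

locale ae_ultrafilter =
  fixes M :: "'a measure" and U :: "'a filter"
  assumes ultrafilter: "ultrafilter U" and le_ae_filter: "U \<le> ae_filter M"
begin

lemma not_trivial_limit: "\<not> trivial_limit U"
  using ultrafilter unfolding ultrafilter_def by simp

lemma eventually_if_AE: "AE x in M. P x \<Longrightarrow> eventually P U"
  using le_ae_filter by (simp add: le_filter_def)

lemma tendsto_Lim_ess_bounded:
  assumes "ess_bounded M f"
  shows "(f \<longlongrightarrow> Lim U f) U"
proof -
  obtain C where "AE x in M. \<bar>f x\<bar> \<le> C" using assms unfolding ess_bounded_def by blast
  then have "AE x in M. f x \<in> {-C..C}" by eventually_elim auto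
  then have "eventually (\<lambda>x. f x \<in> {-C..C}) U" by (rule eventually_if_AE)
  then obtain l where "(f \<longlongrightarrow> l) U" using ultrafilter_tendsto_compact[OF ultrafilter compact_Icc] by blast
  moreover from this have "Lim U f = l" by (rule tendsto_Lim[OF not_trivial_limit])
  ultimately show ?thesis by simp
qed

lemma Lim_add:
  assumes "ess_bounded M f" "ess_bounded M g"
  shows "Lim U (\<lambda>x. f x + g x) = Lim U f + Lim U g"
  using assms by (intro tendsto_Lim not_trivial_limit tendsto_add tendsto_Lim_ess_bounded)

lemma Lim_cmult:
  assumes "ess_bounded M f"
  shows "Lim U (\<lambda>x. a * f x) = a * Lim U f"
  using assms by (intro tendsto_Lim not_trivial_limit tendsto_mult_left tendsto_Lim_ess_bounded)

lemma Lim_AE_cong: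
  assumes "ess_bounded M g" "AE x in M. f x = g x"
  shows "Lim U f = Lim U g"
proof -
  have "AE x in M. g x = f x" using assms(2) by eventually_elim simp
  then have "eventually (\<lambda>x. g x = f x) U" by (rule eventually_if_AE)
  then have "(f \<longlongrightarrow> Lim U g) U"
    using tendsto_Lim_ess_bounded[OF assms(1)] tendsto_cong by blast
  then show ?thesis by (rule tendsto_Lim[OF not_trivial_limit])
qed

lemma abs_Lim_le_ess_norm:
  assumes "ess_bounded M f"
  shows "\<bar>Lim U f\<bar> \<le> ess_norm M f"
  unfolding ess_norm_def
proof (rule cInf_greatest)
  obtain C where "AE x in M. \<bar>f x\<bar> \<le> C" using assms unfolding ess_bounded_def by blast
  then have "AE x in M. \<bar>f x\<bar> \<le> max C 0" by eventually_elim simp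
  then have "max C 0 \<in> {C. C \<ge> 0 \<and> (AE x in M. \<bar>f x\<bar> \<le> C)}" by simp
  then show "{C. C \<ge> 0 \<and> (AE x in M. \<bar>f x\<bar> \<le> C)} \<noteq> {}" by blast
next
  fix D assume "D \<in> {C. C \<ge> 0 \<and> (AE x in M. \<bar>f x\<bar> \<le> C)}"
  then have "eventually (\<lambda>x. \<bar>f x\<bar> \<le> D) U" by (auto intro: eventually_if_AE)
  then show "\<bar>Lim U f\<bar> \<le> D"
    using tendsto_rabs[OF tendsto_Lim_ess_bounded[OF assms]] by (rule tendsto_upperbound[OF _ _ not_trivial_limit, rotated])
qed

end

lemma ae_ultrafilter_separating:
  fixes f g :: "'a \<Rightarrow> real"
  assumes f: "ess_bounded M f" and g: "ess_bounded M g" and neq: "\<not> (AE x in M. f x = g x)"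
  obtains U where "ae_ultrafilter M U" "Lim U f \<noteq> Lim U g"
proof -
  obtain e where "e > 0" and apart: "\<not> (AE x in M. \<bar>f x - g x\<bar> \<le> e)"
    using neq AE_eq_if_AE_abs_diff_le by blast
  define F where "F = inf (ae_filter M) (principal {x. e < \<bar>f x - g x\<bar>})"
  have "F \<noteq> bot"
    using apart unfolding F_def trivial_limit_def eventually_inf_principal by (simp add: not_less)
  then obtain U where U: "ultrafilter U" "U \<le> F" by (rule ultrafilter_finer)
  interpret ae_ultrafilter M U
    using U unfolding F_def by unfold_locales (simp_all add: le_inf_iff)
  have "eventually (\<lambda>x. e < \<bar>f x - g x\<bar>) F"
    unfolding F_def eventually_inf_principal by simp
  then have "eventually (\<lambda>x. e \<le> \<bar>f x - g x\<bar>) U"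
    by (rule eventually_mono[OF filter_leD[OF U(2)]]) simp
  moreover have "((\<lambda>x. \<bar>f x - g x\<bar>) \<longlongrightarrow> \<bar>Lim U f - Lim U g\<bar>) U"
    using f g by (intro tendsto_intros tendsto_Lim_ess_bounded)
  ultimately have "e \<le> \<bar>Lim U f - Lim U g\<bar>"
    by (rule tendsto_lowerbound[OF _ _ not_trivial_limit, rotated])
  then have "Lim U f \<noteq> Lim U g" using \<open>e > 0\<close> by auto
  then show ?thesis using that ae_ultrafilter_axioms by blast
qed

text \<open>The elements of \<open>Linf_rho \<rho>\<close> need not be measurable, so the separating functional is
  a limit along an ultrafilter rather than an integral.\<close>
lemma lin_separable_if_AE_eq:
  assumes f0: "f0 \<in> Linf_rho \<rho>" and g0: "g0 \<in> Linf_rho \<rho>"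
    and neq: "\<not> (AE t in \<rho>. f0 t = g0 t)"
    and S: "S \<subseteq> {f \<in> Linf_rho \<rho>. AE t in \<rho>. f t = f0 t}"
    and T: "T \<subseteq> {f \<in> Linf_rho \<rho>. AE t in \<rho>. f t = g0 t}"
  shows "lin_separable \<rho> S T"
proof -
  have bdd: "ess_bounded \<rho> f" if "f \<in> Linf_rho \<rho>" for f
    using that unfolding Linf_rho_def by simp
  obtain U where "ae_ultrafilter \<rho> U" "Lim U f0 \<noteq> Lim U g0"
    using ae_ultrafilter_separating[OF bdd[OF f0] bdd[OF g0] neq] by blast
  interpret ae_ultrafilter \<rho> U by fact
  define s where "s = Lim U f0 - Lim U g0"
  define L where "L f = s * Lim U f" for f
  define c where "c = (L f0 + L g0) / 2"
  have "0 < s\<^sup>2" using \<open>Lim U f0 \<noteq> Lim U g0\<close> unfolding s_def by simp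
  moreover have "L f0 - L g0 = s\<^sup>2" unfolding L_def s_def by (simp add: power2_eq_square algebra_simps)
  ultimately have "L g0 < L f0" by linarith
  then have c_between: "L g0 < c" "c < L f0" unfolding c_def by simp_all
  have "c < L f" if "f \<in> S" for f
  proof -
    have "AE t in \<rho>. f t = f0 t" using that S by blast
    then have "Lim U f = Lim U f0" by (rule Lim_AE_cong[OF bdd[OF f0]])
    then show ?thesis using c_between unfolding L_def by simp
  qed
  moreover have "L f < c" if "f \<in> T" for f
  proof -
    have "AE t in \<rho>. f t = g0 t" using that T by blast
    then have "Lim U f = Lim U g0" by (rule Lim_AE_cong[OF bdd[OF g0]])
    then show ?thesis using c_between unfolding L_def by simp
  qed
  moreover have "L (\<lambda>x. f x + g x) = L f + L g" if "f \<in> Linf_rho \<rho>" "g \<in> Linf_rho \<rho>" for f g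
    unfolding L_def using Lim_add[OF bdd[OF that(1)] bdd[OF that(2)]] by (simp add: distrib_left)
  moreover have "L (\<lambda>x. a * f x) = a * L f" if "f \<in> Linf_rho \<rho>" for f a
    unfolding L_def using Lim_cmult[OF bdd[OF that]] by simp
  moreover have "\<bar>L f\<bar> \<le> \<bar>s\<bar> * ess_norm \<rho> f" if "f \<in> Linf_rho \<rho>" for f
    unfolding L_def abs_mult using abs_Lim_le_ess_norm[OF bdd[OF that]] by (simp add: mult_left_mono)
  ultimately show ?thesis
    using S T unfolding lin_separable_def by blast
qed

section \<open>The cumulative distribution transform\<close>

lemma cdf_eq_distribution_cdf: "cdf = Distribution_Functions.cdf"
  by (simp add: fun_eq_iff cdf_def cdf_def2)

context real_distribution
begin

lemma cdf_mono: "x \<le> y \<Longrightarrow> cdf M x \<le> cdf M y"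
  unfolding cdf_eq_distribution_cdf by (rule cdf_nondecreasing)

lemma cdf_bounds: "0 \<le> cdf M x" "cdf M x \<le> 1"
  unfolding cdf_eq_distribution_cdf by (rule cdf_nonneg, rule cdf_bounded_prob)

lemma borel_measurable_cdf [measurable]: "cdf M \<in> borel_measurable borel"
  by (rule borel_measurable_mono) (simp add: mono_def cdf_mono)

end

locale atomless_real_distribution = real_distribution +
  assumes measure_singleton: "measure M {x} = 0"
begin

lemma continuous_on_cdf: "continuous_on A (cdf M)"
  unfolding cdf_eq_distribution_cdf using isCont_cdf measure_singleton
  by (simp add: continuous_at_imp_continuous_on)

lemma measure_cdf_le: "measure M {x. cdf M x \<le> v} \<le> v" if "0 \<le> v" for v
proof (cases "v < 1")
  case False
  then show ?thesis using prob_le_1[of "{x. cdf M x \<le> v}"] by linarith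
next
  case True
  define S where "S = {x. cdf M x \<le> v}"
  show ?thesis
  proof (cases "S = {}")
    case True
    then show ?thesis using that unfolding S_def by simp
  next
    case False
    have "eventually (\<lambda>x. v < cdf M x) at_top"
      using cdf_lim_at_top_prob \<open>v < 1\<close> unfolding cdf_eq_distribution_cdf by (rule order_tendstoD)
    then obtain X where X: "\<And>x. X \<le> x \<Longrightarrow> v < cdf M x" by (auto simp: eventually_at_top_linorder)
    have "x \<le> X" if "x \<in> S" for x
      using X[of x] that unfolding S_def by (cases "X \<le> x") auto
    then have bdd: "bdd_above S" by (rule bdd_aboveI)
    moreover have "closed S"
      unfolding S_def using continuous_on_cdf by (intro closed_Collect_le continuous_intros) auto
    ultimately have "cdf M (Sup S) \<le> v"
      using closed_contains_Sup[OF False] unfolding S_def by blast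
    moreover have "measure M S \<le> cdf M (Sup S)"
      unfolding cdf_def using cSup_upper[OF _ bdd] by (intro finite_measure_mono) auto
    ultimately show ?thesis unfolding S_def by linarith
  qed
qed

lemma measure_cdf_less: "v \<le> measure M {x. cdf M x < v}" if "v \<le> 1" for v
proof (rule dense_le)
  fix w assume "w < v"
  show "w \<le> measure M {x. cdf M x < v}"
  proof (cases "w \<le> 0")
    case False
    have "eventually (\<lambda>x. w < cdf M x) at_top"
      using order_tendstoD(1)[OF cdf_lim_at_top_prob] \<open>w < v\<close> that
      unfolding cdf_eq_distribution_cdf by simp
    then obtain x2 where x2: "w < cdf M x2" by (auto simp: eventually_at_top_linorder)
    have "eventually (\<lambda>x. cdf M x < w) at_bot"
      using cdf_lim_at_bot False unfolding cdf_eq_distribution_cdf by (intro order_tendstoD) auto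
    then obtain N where "\<And>x. x \<le> N \<Longrightarrow> cdf M x < w" by (auto simp: eventually_at_bot_linorder)
    then obtain x1 where x1: "x1 \<le> x2" "cdf M x1 < w" using min.cobounded1 min.cobounded2 by blast
    then obtain x where "cdf M x = w"
      using IVT'[of "cdf M" x1 w x2] x2 continuous_on_cdf by force
    then have "w = measure M {..x}" by (simp add: cdf_def)
    also have "\<dots> \<le> measure M {x. cdf M x < v}"
      using \<open>cdf M x = w\<close> \<open>w < v\<close> by (intro finite_measure_mono) (auto intro: le_less_trans cdf_mono)
    finally show ?thesis .
  qed (simp add: order.trans[OF _ measure_nonneg])
qed

lemma AE_cdf_less_1: "AE x in M. cdf M x < 1"
proof -
  have "prob {x \<in> space M. cdf M x < 1} = 1"
    using measure_cdf_less[of 1] prob_le_1 by (simp add: antisym)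
  then show ?thesis
    by (subst (asm) prob_Collect_eq_1) auto
qed

end

locale bounded_real_distribution = real_distribution +
  fixes R :: real
  assumes AE_abs_le: "AE s in M. \<bar>s\<bar> \<le> R"
begin

lemma cdf_below:
  assumes "s < - R" shows "cdf M s = 0"
proof -
  have "AE x in M. x \<notin> {..s}" using AE_abs_le by (rule eventually_mono) (use assms in auto)
  then have "{..s} \<in> null_sets M" by (subst AE_iff_null_sets) auto
  then show ?thesis by (simp add: cdf_def measure_eq_0_null_sets)
qed

lemma cdf_above:
  assumes "R \<le> s" shows "cdf M s = 1"
proof -
  have "AE x in M. x \<le> s" using AE_abs_le by (rule eventually_mono) (use assms in auto)
  then show ?thesis
    unfolding cdf_def atMost_def by (subst prob_Collect_eq_1[where P = "\<lambda>x. x \<le> s", simplified]) auto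
qed

context
  fixes u :: real
  assumes u: "0 \<le> u" "u < 1"
begin

lemma R_in_cdf_superlevel: "R \<in> {s. u < cdf M s}"
  using cdf_above u by simp

lemma cdf_superlevel_ge: "u < cdf M s \<Longrightarrow> - R \<le> s"
  using cdf_below[of s] u by (cases "s < - R") auto

lemma bdd_below_cdf_superlevel: "bdd_below {s. u < cdf M s}"
  by (rule bdd_belowI[of _ "- R"]) (auto intro: cdf_superlevel_ge)

lemma gen_inv_le: "u < cdf M s \<Longrightarrow> gen_inv M u \<le> s"
  unfolding gen_inv_def using bdd_below_cdf_superlevel by (auto intro: cInf_lower)

lemma gen_inv_bounds: "- R \<le> gen_inv M u" "gen_inv M u \<le> R"
proof -
  show "gen_inv M u \<le> R" using gen_inv_le R_in_cdf_superlevel by simp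
  show "- R \<le> gen_inv M u"
    unfolding gen_inv_def using R_in_cdf_superlevel bdd_below_cdf_superlevel
    by (intro cInf_greatest) (auto intro: cdf_superlevel_ge)
qed

lemma le_cdf_if_gen_inv_le:
  assumes "gen_inv M u \<le> s" shows "u \<le> cdf M s"
proof (rule ccontr)
  assume "\<not> u \<le> cdf M s"
  moreover have "((cdf M) \<longlongrightarrow> cdf M s) (at_right s)"
    using cdf_is_right_cont[of s] unfolding cdf_eq_distribution_cdf continuous_within .
  ultimately have "eventually (\<lambda>x. cdf M x < u) (at_right s)"
    by (intro order_tendstoD(2)) auto
  then obtain b where "s < b" and b: "\<And>y. s < y \<Longrightarrow> y < b \<Longrightarrow> cdf M y < u"
    unfolding eventually_at_right_field by blast
  have "(s + b) / 2 \<le> gen_inv M u"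
    unfolding gen_inv_def
  proof (rule cInf_greatest)
    show "{s. u < cdf M s} \<noteq> {}" using R_in_cdf_superlevel by blast
    fix t assume "t \<in> {s. u < cdf M s}"
    then have "cdf M ((s + b) / 2) < cdf M t" using b[of "(s + b) / 2"] \<open>s < b\<close> by simp
    then show "(s + b) / 2 \<le> t" using cdf_mono[of t "(s + b) / 2"] by linarith
  qed
  then show False using assms \<open>s < b\<close> by simp
qed

lemma gen_inv_less_iff: "gen_inv M u < a \<longleftrightarrow> (\<exists>q\<in>\<rat>. q < a \<and> u < cdf M q)"
proof
  assume "gen_inv M u < a"
  then obtain s where s: "u < cdf M s" "s < a"
    unfolding gen_inv_def using cInf_less_iff[OF _ bdd_below_cdf_superlevel] R_in_cdf_superlevel by blast
  obtain q where q: "q \<in> \<rat>" "s < q" "q < a" using Rats_dense_in_real[OF s(2)] by blast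
  have "u < cdf M q" using s(1) cdf_mono[of s q] q by simp
  then show "\<exists>q\<in>\<rat>. q < a \<and> u < cdf M q" using q by blast
next
  assume "\<exists>q\<in>\<rat>. q < a \<and> u < cdf M q"
  then show "gen_inv M u < a" using gen_inv_le by (meson le_less_trans)
qed

end

lemma gen_inv_eq_Inf_empty:
  assumes "1 \<le> u" shows "gen_inv M u = Inf {}"
proof -
  have "{s. u < cdf M s} = {}"
    using cdf_bounded_prob assms unfolding cdf_eq_distribution_cdf by (auto simp: not_less intro: order.trans)
  then show ?thesis unfolding gen_inv_def by simp
qed

text \<open>For \<open>u \<ge> 1\<close>, \<open>gen_inv M u\<close> is the junk value \<open>Inf {}\<close>, an infimum over the empty set.\<close>
lemma abs_gen_inv_le: "0 \<le> u \<Longrightarrow> \<bar>gen_inv M u\<bar> \<le> max R \<bar>Inf {}\<bar>"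
  using gen_inv_bounds gen_inv_eq_Inf_empty by (cases "u < 1") force+

end

lemma measurable_gen_inv:
  assumes M: "\<And>\<omega>. bounded_real_distribution (M \<omega>) (R \<omega>)"
    and u: "u \<in> borel_measurable N" "\<And>\<omega>. 0 \<le> u \<omega>"
    and cdf: "\<And>q. (\<lambda>\<omega>. cdf (M \<omega>) q) \<in> borel_measurable N"
  shows "(\<lambda>\<omega>. gen_inv (M \<omega>) (u \<omega>)) \<in> borel_measurable N"
  unfolding borel_measurable_iff_less
proof
  fix a
  have "gen_inv (M \<omega>) (u \<omega>) < a \<longleftrightarrow>
      (\<exists>q\<in>\<rat> \<inter> {..<a}. u \<omega> < 1 \<and> u \<omega> < cdf (M \<omega>) q) \<or> (1 \<le> u \<omega> \<and> Inf {} < a)" for \<omega>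
    using bounded_real_distribution.gen_inv_less_iff[OF M u(2)]
      bounded_real_distribution.gen_inv_eq_Inf_empty[OF M]
    by (cases "u \<omega> < 1") auto
  then have "{\<omega> \<in> space N. gen_inv (M \<omega>) (u \<omega>) < a} =
      (\<Union>q\<in>\<rat> \<inter> {..<a}. {\<omega> \<in> space N. u \<omega> < 1 \<and> u \<omega> < cdf (M \<omega>) q}) \<union>
      {\<omega> \<in> space N. 1 \<le> u \<omega> \<and> Inf {} < a}"
    by auto
  also have "\<dots> \<in> sets N"
  proof -
    note [measurable] = u(1) cdf
    have "{\<omega> \<in> space N. u \<omega> < 1 \<and> u \<omega> < cdf (M \<omega>) q} \<in> sets N" for q by measurable
    moreover have "{\<omega> \<in> space N. 1 \<le> u \<omega> \<and> Inf {} < a} \<in> sets N" by measurable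
    ultimately show ?thesis by (intro sets.Un sets.countable_UN' countable_Int1 countable_rat) auto
  qed
  finally show "{\<omega> \<in> space N. gen_inv (M \<omega>) (u \<omega>) < a} \<in> sets N" .
qed

context bounded_real_distribution
begin

lemma measurable_cdt:
  assumes "real_distribution \<rho>" shows "cdt \<rho> M \<in> borel_measurable borel"
  unfolding cdt_def
  using bounded_real_distribution_axioms real_distribution.borel_measurable_cdf[OF assms]
    real_distribution.cdf_bounds(1)[OF assms]
  by (intro measurable_gen_inv[where M = "\<lambda>_. M"]) auto

lemma distr_cdt:
  assumes "atomless_real_distribution \<rho>" shows "distr \<rho> borel (cdt \<rho> M) = M"
proof -
  interpret \<rho>: atomless_real_distribution \<rho> by (rule assms)
  have [measurable]: "cdt \<rho> M \<in> borel_measurable \<rho>"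
    using measurable_cdt[OF \<rho>.real_distribution_axioms] by simp
  have "measure \<rho> {x. cdt \<rho> M x \<le> s} = cdf M s" for s
  proof (rule antisym)
    have "AE x in \<rho>. cdt \<rho> M x \<le> s \<longrightarrow> cdf \<rho> x \<le> cdf M s"
      using \<rho>.AE_cdf_less_1
      by (rule eventually_mono) (auto simp: cdt_def intro: le_cdf_if_gen_inv_le \<rho>.cdf_bounds)
    then have "measure \<rho> {x. cdt \<rho> M x \<le> s} \<le> measure \<rho> {x. cdf \<rho> x \<le> cdf M s}"
      by (intro \<rho>.finite_measure_mono_AE) auto
    also have "\<dots> \<le> cdf M s"
      using \<rho>.measure_cdf_le cdf_bounds by blast
    finally show "measure \<rho> {x. cdt \<rho> M x \<le> s} \<le> cdf M s" .
  next
    have "cdf M s \<le> measure \<rho> {x. cdf \<rho> x < cdf M s}"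
      using \<rho>.measure_cdf_less cdf_bounds by blast
    also have "\<dots> \<le> measure \<rho> {x. cdt \<rho> M x \<le> s}"
    proof (rule \<rho>.finite_measure_mono)
      show "{x. cdf \<rho> x < cdf M s} \<subseteq> {x. cdt \<rho> M x \<le> s}"
        using cdf_bounds(2)[of s] \<rho>.cdf_bounds(1) by (auto simp: cdt_def intro!: gen_inv_le)
    qed measurable
    finally show "cdf M s \<le> measure \<rho> {x. cdt \<rho> M x \<le> s}" .
  qed
  moreover have "cdf (distr \<rho> borel (cdt \<rho> M)) s = measure \<rho> {x. cdt \<rho> M x \<le> s}" for s
    unfolding cdf_def by (subst measure_distr) (auto simp: vimage_def)
  ultimately have "Distribution_Functions.cdf (distr \<rho> borel (cdt \<rho> M)) = Distribution_Functions.cdf M"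
    by (simp add: fun_eq_iff flip: cdf_eq_distribution_cdf)
  then show ?thesis by (intro cdf_unique \<rho>.real_distribution_distr real_distribution_axioms) simp_all
qed

lemma integral_cdt:
  fixes f :: "real \<Rightarrow> real"
  assumes "atomless_real_distribution \<rho>" "f \<in> borel_measurable borel"
  shows "(\<integral>x. f (cdt \<rho> M x) \<partial>\<rho>) = (\<integral>s. f s \<partial>M)"
proof -
  interpret \<rho>: atomless_real_distribution \<rho> by (rule assms(1))
  have "cdt \<rho> M \<in> borel_measurable \<rho>"
    using measurable_cdt[OF \<rho>.real_distribution_axioms] by simp
  from integral_distr[OF this assms(2)] show ?thesis
    using distr_cdt[OF assms(1)] by simp
qed

lemma mean_cdt: "atomless_real_distribution \<rho> \<Longrightarrow> mean \<rho> (cdt \<rho> M) = mean M (\<lambda>s. s)"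
  unfolding mean_def by (rule integral_cdt) auto

lemma std_cdt: "atomless_real_distribution \<rho> \<Longrightarrow> std \<rho> (cdt \<rho> M) = std M (\<lambda>s. s)"
  unfolding std_def mean_cdt by (subst integral_cdt) auto

lemma integrable_ident: "integrable M (\<lambda>s. s)"
  using AE_abs_le by (intro integrable_const_bound[where B = R]) simp_all

context
  fixes c d :: real
begin

lemma bounded_real_distribution_affine:
  "bounded_real_distribution (distr M borel (\<lambda>s. c * s + d)) (\<bar>c\<bar> * R + \<bar>d\<bar>)"
proof -
  have "\<bar>c * s + d\<bar> \<le> \<bar>c\<bar> * R + \<bar>d\<bar>" if "\<bar>s\<bar> \<le> R" for s
  proof -
    have "\<bar>c * s + d\<bar> \<le> \<bar>c\<bar> * \<bar>s\<bar> + \<bar>d\<bar>" using abs_triangle_ineq[of "c * s" d] by (simp add: abs_mult)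
    also have "\<dots> \<le> \<bar>c\<bar> * R + \<bar>d\<bar>" using that by (simp add: mult_left_mono)
    finally show ?thesis .
  qed
  with AE_abs_le have "AE s in M. \<bar>c * s + d\<bar> \<le> \<bar>c\<bar> * R + \<bar>d\<bar>"
    by (rule eventually_mono)
  then have "AE s in distr M borel (\<lambda>s. c * s + d). \<bar>s\<bar> \<le> \<bar>c\<bar> * R + \<bar>d\<bar>"
    by (subst AE_distr_iff) auto
  moreover have "real_distribution (distr M borel (\<lambda>s. c * s + d))"
    by (rule real_distribution_distr) simp
  ultimately show ?thesis
    unfolding bounded_real_distribution_def bounded_real_distribution_axioms_def by blast
qed

lemma mean_affine: "mean (distr M borel (\<lambda>s. c * s + d)) (\<lambda>s. s) = c * mean M (\<lambda>s. s) + d"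
proof -
  have "mean (distr M borel (\<lambda>s. c * s + d)) (\<lambda>s. s) = (\<integral>s. c * s + d \<partial>M)"
    unfolding mean_def by (rule integral_distr) simp_all
  also have "\<dots> = c * mean M (\<lambda>s. s) + d"
    unfolding mean_def using integrable_ident prob_space by simp
  finally show ?thesis .
qed

lemma std_affine: "std (distr M borel (\<lambda>s. c * s + d)) (\<lambda>s. s) = \<bar>c\<bar> * std M (\<lambda>s. s)"
proof -
  define m where "m = mean M (\<lambda>s. s)"
  have "(\<integral>s. (s - (c * m + d))\<^sup>2 \<partial>distr M borel (\<lambda>s. c * s + d)) =
      (\<integral>s. (c * s + d - (c * m + d))\<^sup>2 \<partial>M)"
    by (rule integral_distr) simp_all
  also have "\<dots> = (\<integral>s. c\<^sup>2 * (s - m)\<^sup>2 \<partial>M)"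
    by (rule Bochner_Integration.integral_cong) (simp_all add: power2_eq_square algebra_simps)
  also have "\<dots> = c\<^sup>2 * (\<integral>s. (s - m)\<^sup>2 \<partial>M)" by simp
  finally show ?thesis
    unfolding std_def mean_affine m_def[symmetric] by (simp add: real_sqrt_mult)
qed

lemma cdf_affine:
  assumes "c > 0" shows "cdf (distr M borel (\<lambda>s. c * s + d)) s = cdf M ((s - d) / c)"
proof -
  have "{x. c * x + d \<le> s} = {..(s - d) / c}" using assms by (auto simp: field_simps)
  then show ?thesis unfolding cdf_def by (subst measure_distr) (auto simp: vimage_def)
qed

lemma gen_inv_affine:
  assumes c: "c > 0" and u: "0 \<le> u" "u < 1"
  shows "gen_inv (distr M borel (\<lambda>s. c * s + d)) u = c * gen_inv M u + d"
proof -
  have "{s. u < cdf (distr M borel (\<lambda>s. c * s + d)) s} = (\<lambda>t. c * t + d) ` {t. u < cdf M t}"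
  proof (intro equalityI subsetI)
    fix s assume "s \<in> {s. u < cdf (distr M borel (\<lambda>s. c * s + d)) s}"
    then have "(s - d) / c \<in> {t. u < cdf M t}" by (simp add: cdf_affine c)
    moreover have "s = c * ((s - d) / c) + d" using c by simp
    ultimately show "s \<in> (\<lambda>t. c * t + d) ` {t. u < cdf M t}" by (rule rev_image_eqI)
  qed (use c in \<open>auto simp: cdf_affine\<close>)
  moreover have "c * Inf {t. u < cdf M t} + d = (INF t\<in>{t. u < cdf M t}. c * t + d)"
    using c R_in_cdf_superlevel[OF u] bdd_below_cdf_superlevel[OF u]
    by (intro continuous_at_Inf_mono) (auto simp: mono_def intro!: continuous_intros)
  ultimately show ?thesis unfolding gen_inv_def by simp
qed

end
end

definition normalized_cdt :: "real measure \<Rightarrow> real measure \<Rightarrow> real \<Rightarrow> real" where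
  "normalized_cdt \<rho> \<nu> t = (cdt \<rho> \<nu> t - mean \<rho> (cdt \<rho> \<nu>)) / std \<rho> (cdt \<rho> \<nu>)"

lemma (in bounded_real_distribution) normalized_cdt_affine:
  assumes \<rho>: "atomless_real_distribution \<rho>" and c: "c > 0" and t: "cdf \<rho> t < 1"
  shows "normalized_cdt \<rho> (distr M borel (\<lambda>s. c * s + d)) t = normalized_cdt \<rho> M t"
proof -
  interpret M': bounded_real_distribution "distr M borel (\<lambda>s. c * s + d)" "\<bar>c\<bar> * R + \<bar>d\<bar>"
    by (rule bounded_real_distribution_affine)
  have "cdt \<rho> (distr M borel (\<lambda>s. c * s + d)) t = c * cdt \<rho> M t + d"
    unfolding cdt_def using gen_inv_affine[OF c _ t] real_distribution.cdf_bounds(1)[of \<rho>] \<rho>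
    by (simp add: atomless_real_distribution_def)
  then show ?thesis
    unfolding normalized_cdt_def M'.mean_cdt[OF \<rho>] M'.std_cdt[OF \<rho>] mean_cdt[OF \<rho>] std_cdt[OF \<rho>]
      mean_affine std_affine
    using c by (simp add: right_diff_distrib[symmetric])
qed

lemma NRCDT_eq_normalized_cdt: "NRCDT \<rho> \<mu> t \<theta> = normalized_cdt \<rho> (radon \<theta> \<mu>) t"
  unfolding NRCDT_def normalized_cdt_def ..

section \<open>Lines and affine maps of the plane\<close>

lemma orthogonal_complement_is_line:
  fixes \<theta> p :: "real^2"
  assumes "\<theta> \<noteq> 0"
  shows "is_line {x. (x - p) \<bullet> \<theta> = 0}"
proof -
  define v :: "real^2" where "v = (\<chi> i. if i = 1 then - \<theta>$2 else \<theta>$1)"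
  have n: "(\<theta>$1)\<^sup>2 + (\<theta>$2)\<^sup>2 \<noteq> 0"
    using assms by (auto simp: vec_eq_iff forall_2 add_nonneg_eq_0_iff)
  have "x = p + ((x - p) \<bullet> v / ((\<theta>$1)\<^sup>2 + (\<theta>$2)\<^sup>2)) *\<^sub>R v" if "(x - p) \<bullet> \<theta> = 0" for x
  proof -
    have "(x$1 - p$1) * \<theta>$1 + (x$2 - p$2) * \<theta>$2 = 0" using that by (simp add: inner_vec_def sum_2)
    then show ?thesis using n
      by (simp add: vec_eq_iff forall_2 v_def inner_vec_def sum_2 field_simps) algebra
  qed
  moreover have "(p + s *\<^sub>R v - p) \<bullet> \<theta> = 0" for s
    by (simp add: v_def inner_vec_def sum_2 algebra_simps)
  moreover have "v \<noteq> 0" using assms by (auto simp: v_def vec_eq_iff forall_2)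
  ultimately have "{x. (x - p) \<bullet> \<theta> = 0} = {p + s *\<^sub>R v |s. True}" by blast
  then show ?thesis unfolding is_line_def using \<open>v \<noteq> 0\<close> by blast
qed

lemma invertible_mult_vec_eq_0_iff:
  fixes B :: "real^'n^'n"
  assumes "invertible B"
  shows "B *v v = 0 \<longleftrightarrow> v = 0"
  using assms invertible_left_inverse matrix_left_invertible_ker by auto

lemma is_line_affine_image:
  fixes B :: "real^2^2"
  assumes "invertible B" "is_line L"
  shows "is_line ((\<lambda>z. B *v z + b) ` L)"
proof -
  obtain p v where "v \<noteq> 0" "L = {p + s *\<^sub>R v | s. True}" using assms(2) unfolding is_line_def by blast
  moreover have "B *v v \<noteq> 0" using \<open>v \<noteq> 0\<close> invertible_mult_vec_eq_0_iff[OF assms(1)] by simp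
  moreover have "(\<lambda>z. B *v z + b) ` L = {(B *v p + b) + s *\<^sub>R (B *v v) | s. True}"
    unfolding \<open>L = _\<close>
    by (auto simp: matrix_vector_right_distrib matrix_vector_mult_scaleR algebra_simps
        intro!: image_eqI[where x = "p + _ *\<^sub>R v"])
  ultimately show ?thesis unfolding is_line_def by blast
qed

lemma continuous_on_affine_matrix: "continuous_on S (\<lambda>x. B *v x + b)"
  for B :: "real^'n^'m"
  by (intro continuous_intros)

lemma invertible_affine_inverse:
  fixes A :: "real^'n^'n"
  assumes "invertible A"
  shows "\<exists>B c. invertible B \<and> (\<forall>x. B *v (A *v x + y) + c = x) \<and> (\<forall>z. A *v (B *v z + c) + y = z)"
proof -
  obtain B where B: "A ** B = mat 1" "B ** A = mat 1" using assms unfolding invertible_def by blast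
  then have "invertible B" unfolding invertible_def by blast
  with B show ?thesis
    by (intro exI[of _ B] exI[of _ "- (B *v y)"])
       (simp add: matrix_vector_right_distrib matrix_vector_mult_diff_distrib matrix_vector_mul_assoc)
qed

lemma inner_matrix_vector_mult: "(A *v x) \<bullet> \<theta> = x \<bullet> (transpose A *v \<theta>)"
  for A :: "real^'n^'m"
  using dot_lmul_matrix[of x "transpose A" \<theta>] by simp

section \<open>Supports of planar measures\<close>

lemma null_sets_compl_mu_support:
  assumes "sets \<mu> = sets borel"
  shows "UNIV - mu_support \<mu> \<in> null_sets \<mu>"
proof -
  define F where "F = {ball x e | x e. emeasure \<mu> (ball x e) = 0}"
  obtain F' where F': "F' \<subseteq> F" "countable F'" "\<Union>F' = \<Union>F"
    using Lindelof[of F] unfolding F_def by blast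
  have "\<Union>F = UNIV - mu_support \<mu>"
  proof (intro equalityI subsetI)
    fix z assume "z \<in> \<Union>F"
    then obtain x e where "z \<in> ball x e" "emeasure \<mu> (ball x e) = 0" unfolding F_def by blast
    moreover obtain e' where "e' > 0" "ball z e' \<subseteq> ball x e"
      using \<open>z \<in> ball x e\<close> open_ball open_contains_ball by blast
    ultimately have "emeasure \<mu> (ball z e') = 0"
      using assms by (metis emeasure_mono le_zero_eq sets.sets_into_space borel_open open_ball)
    then show "z \<in> UNIV - mu_support \<mu>" unfolding mu_support_def using \<open>e' > 0\<close> by force
  next
    fix z assume "z \<in> UNIV - mu_support \<mu>"
    then obtain e where "e > 0" "emeasure \<mu> (ball z e) = 0" unfolding mu_support_def by (auto simp: not_less)
    then show "z \<in> \<Union>F" unfolding F_def by force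
  qed
  moreover have "(\<Union>S\<in>F'. S) \<in> null_sets \<mu>"
    using F'(1) assms unfolding F_def by (intro null_sets_UN'[OF F'(2)]) (auto simp: null_sets_def)
  ultimately show ?thesis using F'(3) by simp
qed

lemma mu_support_subset_closed:
  assumes "sets \<mu> = sets borel" "closed S" "AE x in \<mu>. x \<in> S"
  shows "mu_support \<mu> \<subseteq> S"
proof
  fix x assume x: "x \<in> mu_support \<mu>"
  show "x \<in> S"
  proof (rule ccontr)
    assume "x \<notin> S"
    then obtain e where "e > 0" "ball x e \<subseteq> - S" using assms(2) open_contains_ball by (metis open_Compl ComplI)
    moreover have "- S \<in> null_sets \<mu>"
    proof (subst AE_iff_null_sets)
      show "- S \<in> sets \<mu>" using assms(1,2) by (simp add: borel_open open_Compl)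
      show "AE x in \<mu>. x \<notin> - S" using assms(3) by simp
    qed
    ultimately have "emeasure \<mu> (ball x e) = 0"
      using assms(1) by (metis null_sets_subset borel_open open_ball null_setsD1)
    then show False using x \<open>e > 0\<close> unfolding mu_support_def by force
  qed
qed

lemma mu_support_distr_continuous:
  assumes sets: "sets \<mu> = sets borel" and T: "continuous_on UNIV T"
  shows "T ` mu_support \<mu> \<subseteq> mu_support (distr \<mu> borel T)"
proof (intro image_subsetI)
  fix x assume x: "x \<in> mu_support \<mu>"
  have T_meas: "T \<in> measurable \<mu> borel"
    using borel_measurable_continuous_onI[OF T] measurable_cong_sets[OF sets refl] by blast
  show "T x \<in> mu_support (distr \<mu> borel T)"
    unfolding mu_support_def
  proof (intro CollectI allI impI)
    fix e :: real assume "e > 0"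
    have "open (T -` ball (T x) e)" using T by (intro open_vimage) auto
    moreover have "x \<in> T -` ball (T x) e" using \<open>e > 0\<close> by simp
    ultimately obtain d where "d > 0" "ball x d \<subseteq> T -` ball (T x) e" by (rule openE)
    have "0 < emeasure \<mu> (ball x d)" using x \<open>d > 0\<close> unfolding mu_support_def by blast
    also have "\<dots> \<le> emeasure \<mu> (T -` ball (T x) e \<inter> space \<mu>)"
      using \<open>ball x d \<subseteq> _\<close> \<open>open (T -` _)\<close> sets
      by (intro emeasure_mono) (auto simp: sets_eq_imp_space_eq[OF sets])
    also have "\<dots> = emeasure (distr \<mu> borel T) (ball (T x) e)"
      using T_meas by (simp add: emeasure_distr)
    finally show "0 < emeasure (distr \<mu> borel T) (ball (T x) e)" .
  qed
qed

lemma mu_support_affine_push: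
  assumes sets: "sets \<mu> = sets borel" and A: "invertible A"
  shows "mu_support (affine_push A y \<mu>) = (\<lambda>x. A *v x + y) ` mu_support \<mu>"
proof
  obtain B c where "invertible B" and BA: "\<And>x. B *v (A *v x + y) + c = x"
    and AB: "\<And>z. A *v (B *v z + c) + y = z"
    using invertible_affine_inverse[OF A, of y] by blast
  have "(\<lambda>z. B *v z + c) \<in> borel_measurable borel"
    by (intro borel_measurable_continuous_onI continuous_on_affine_matrix)
  moreover have "(\<lambda>x. A *v x + y) \<in> borel_measurable \<mu>"
    unfolding measurable_cong_sets[OF sets refl]
    by (intro borel_measurable_continuous_onI continuous_on_affine_matrix)
  ultimately have "distr (affine_push A y \<mu>) borel (\<lambda>z. B *v z + c) = distr \<mu> borel (\<lambda>x. x)"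
    unfolding affine_push_def by (simp add: distr_distr o_def BA)
  then have "distr (affine_push A y \<mu>) borel (\<lambda>z. B *v z + c) = \<mu>"
    using distr_id2[OF sets[symmetric]] by simp
  then have inverse_image: "(\<lambda>z. B *v z + c) ` mu_support (affine_push A y \<mu>) \<subseteq> mu_support \<mu>"
    using mu_support_distr_continuous[OF _ continuous_on_affine_matrix, of "affine_push A y \<mu>" B c]
    by (simp add: affine_push_def)
  show "mu_support (affine_push A y \<mu>) \<subseteq> (\<lambda>x. A *v x + y) ` mu_support \<mu>"
  proof
    fix z assume "z \<in> mu_support (affine_push A y \<mu>)"
    then have "B *v z + c \<in> mu_support \<mu>" using inverse_image by blast
    then show "z \<in> (\<lambda>x. A *v x + y) ` mu_support \<mu>"
      by (rule image_eqI[where f = "\<lambda>x. A *v x + y", OF AB[symmetric]])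
  qed
  show "(\<lambda>x. A *v x + y) ` mu_support \<mu> \<subseteq> mu_support (affine_push A y \<mu>)"
    unfolding affine_push_def by (rule mu_support_distr_continuous[OF sets continuous_on_affine_matrix])
qed

section \<open>Compactly supported planar distributions\<close>

lemma AE_circle_measure_norm: "AE \<theta> in circle_measure. norm \<theta> = 1"
proof -
  have norm_eq: "norm (\<chi> i::2. if i = 1 then cos t else sin t) = 1" for t :: real
    by (simp add: norm_vec_def L2_set_def sum_2)
  have "continuous_on UNIV (\<lambda>t::real. \<chi> i::2. if i = 1 then cos t else sin t)"
  proof (rule continuous_on_vec_lambda)
    show "continuous_on UNIV (\<lambda>t::real. if i = 1 then cos t else sin t)" for i :: 2
      by (cases "i = 1") (auto intro!: continuous_intros)
  qed
  then have "(\<lambda>t::real. \<chi> i::2. if i = 1 then cos t else sin t) \<in> borel_measurable borel"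
    by (rule borel_measurable_continuous_onI)
  then show ?thesis
    unfolding circle_measure_def by (subst AE_distr_iff) (auto simp: norm_eq measurable_restrict_space1)
qed

locale compactly_supported_distribution = prob_space M for M :: "(real^2) measure" +
  assumes sets_eq_borel [measurable_cong]: "sets M = sets borel"
    and compact_support: "compact (mu_support M)"
begin

lemma space_eq_UNIV [simp]: "space M = UNIV"
  using sets_eq_imp_space_eq[OF sets_eq_borel] by simp

lemma measurable_M_eq [simp]: "measurable M N = measurable borel N"
  by (rule measurable_cong_sets[OF sets_eq_borel refl])

lemma AE_in_support: "AE x in M. x \<in> mu_support M"
  using null_sets_compl_mu_support[OF sets_eq_borel] by (rule AE_I') auto

lemma AE_norm_bounded: "\<exists>R. AE x in M. norm x \<le> R"
proof -
  obtain R where "\<And>x. x \<in> mu_support M \<Longrightarrow> norm x \<le> R"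
    using compact_imp_bounded[OF compact_support] unfolding bounded_iff by blast
  with AE_in_support show ?thesis by (blast intro: eventually_mono)
qed

lemma prob_space_affine_push: "prob_space (affine_push A y M)"
  unfolding affine_push_def
  by (intro prob_space_distr) (simp add: borel_measurable_continuous_onI continuous_on_affine_matrix)

lemma integrable_continuous:
  fixes f :: "real^2 \<Rightarrow> 'b::{banach, second_countable_topology}"
  assumes "continuous_on UNIV f"
  shows "integrable M f"
proof -
  obtain B where "\<And>x. x \<in> mu_support M \<Longrightarrow> norm (f x) \<le> B"
    using compact_imp_bounded[OF compact_continuous_image[OF continuous_on_subset[OF assms] compact_support]]
    by (auto simp: bounded_iff)
  with AE_in_support have "AE x in M. norm (f x) \<le> B" by (rule eventually_mono) simp
  moreover have "f \<in> borel_measurable M" using borel_measurable_continuous_onI[OF assms] by simp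
  ultimately show ?thesis by (intro integrable_const_bound[where B = B])
qed

end

definition radon_mean :: "(real^2) measure \<Rightarrow> real^2 \<Rightarrow> real" where
  "radon_mean \<mu> \<theta> = (\<integral>x. x \<bullet> \<theta> \<partial>\<mu>)"

definition radon_var :: "(real^2) measure \<Rightarrow> real^2 \<Rightarrow> real" where
  "radon_var \<mu> \<theta> = (\<integral>x. (x \<bullet> \<theta> - radon_mean \<mu> \<theta>)\<^sup>2 \<partial>\<mu>)"

context compactly_supported_distribution
begin

lemma bounded_real_distribution_radon:
  assumes "AE x in M. norm x \<le> R"
  shows "bounded_real_distribution (radon \<theta> M) (R * norm \<theta>)"
proof -
  have "\<bar>x \<bullet> \<theta>\<bar> \<le> R * norm \<theta>" if "norm x \<le> R" for x
    using Cauchy_Schwarz_ineq2[of x \<theta>] mult_right_mono[OF that norm_ge_zero[of \<theta>]] by linarith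
  with assms have "AE x in M. \<bar>x \<bullet> \<theta>\<bar> \<le> R * norm \<theta>" by (rule eventually_mono)
  then have "AE s in radon \<theta> M. \<bar>s\<bar> \<le> R * norm \<theta>"
    unfolding radon_def by (subst AE_distr_iff) auto
  moreover have "real_distribution (radon \<theta> M)"
    unfolding radon_def by (rule real_distribution_distr) simp
  ultimately show ?thesis
    unfolding bounded_real_distribution_def bounded_real_distribution_axioms_def by blast
qed

lemma mean_radon: "mean (radon \<theta> M) (\<lambda>s. s) = radon_mean M \<theta>"
  unfolding mean_def radon_mean_def radon_def by (rule integral_distr) simp_all

lemma std_radon: "std (radon \<theta> M) (\<lambda>s. s) = sqrt (radon_var M \<theta>)"
  unfolding std_def radon_var_def mean_radon unfolding radon_def by (subst integral_distr) simp_all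

definition barycenter :: "real^2" where "barycenter = (\<integral>x. x \<partial>M)"

lemma radon_mean_eq: "radon_mean M \<theta> = barycenter \<bullet> \<theta>"
  unfolding radon_mean_def barycenter_def by (simp add: integrable_continuous continuous_on_id)

lemma radon_var_eq: "radon_var M \<theta> = (\<integral>x. ((x - barycenter) \<bullet> \<theta>)\<^sup>2 \<partial>M)"
  unfolding radon_var_def radon_mean_eq by (simp add: inner_diff_left)

lemma radon_var_quadratic_form:
  "radon_var M \<theta> = (\<Sum>i\<in>UNIV. \<Sum>j\<in>UNIV. \<theta>$i * \<theta>$j * (\<integral>x. (x - barycenter)$i * (x - barycenter)$j \<partial>M))"
proof -
  have "((x - barycenter) \<bullet> \<theta>)\<^sup>2 = (\<Sum>i\<in>UNIV. \<Sum>j\<in>UNIV. \<theta>$i * \<theta>$j * ((x - barycenter)$i * (x - barycenter)$j))" for x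
    unfolding inner_vec_def power2_eq_square sum_product by (simp add: algebra_simps)
  then show ?thesis
    unfolding radon_var_eq
    by (simp add: integrable_continuous continuous_intros del: vector_minus_component)
qed

lemma continuous_on_radon_var: "continuous_on A (radon_var M)"
  unfolding radon_var_quadratic_form by (intro continuous_intros)

lemma NRCDT_eq_cdt_radon:
  assumes "atomless_real_distribution \<rho>"
  shows "NRCDT \<rho> M t \<theta> = (cdt \<rho> (radon \<theta> M) t - radon_mean M \<theta>) / sqrt (radon_var M \<theta>)"
proof -
  obtain R where "AE x in M. norm x \<le> R" using AE_norm_bounded by blast
  then interpret radon: bounded_real_distribution "radon \<theta> M" "R * norm \<theta>" by (rule bounded_real_distribution_radon)
  show ?thesis
    unfolding NRCDT_def radon.mean_cdt[OF assms] radon.std_cdt[OF assms] mean_radon std_radon ..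
qed

lemma borel_measurable_cdf_radon: "(\<lambda>\<theta>. cdf (radon \<theta> M) q) \<in> borel_measurable borel"
proof -
  interpret sigma_finite_measure M by (rule prob_space_imp_sigma_finite) unfold_locales
  define Q where "Q = {(\<theta> :: real^2, x :: real^2). x \<bullet> \<theta> \<le> q}"
  have "Q = {p \<in> space (borel \<Otimes>\<^sub>M M). snd p \<bullet> fst p \<le> q}"
    unfolding Q_def by (auto simp: space_pair_measure)
  also have "\<dots> \<in> sets (borel \<Otimes>\<^sub>M M)" by measurable
  finally have "(\<lambda>\<theta>. emeasure M (Pair \<theta> -` Q)) \<in> borel_measurable borel"
    by (rule measurable_emeasure_Pair)
  moreover have "cdf (radon \<theta> M) q = enn2real (emeasure M (Pair \<theta> -` Q))" for \<theta>
    unfolding cdf_def radon_def Q_def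
    by (subst measure_distr) (auto simp: measure_def vimage_def)
  ultimately show ?thesis by simp
qed

lemma borel_measurable_NRCDT:
  assumes "atomless_real_distribution \<rho>"
  shows "NRCDT \<rho> M t \<in> borel_measurable borel"
proof -
  obtain R where "AE x in M. norm x \<le> R" using AE_norm_bounded by blast
  then have [measurable]: "(\<lambda>\<theta>. cdt \<rho> (radon \<theta> M) t) \<in> borel_measurable borel"
    unfolding cdt_def using real_distribution.cdf_bounds[of \<rho>] assms
    by (intro measurable_gen_inv[where R = "\<lambda>\<theta>. R * norm \<theta>"] bounded_real_distribution_radon borel_measurable_cdf_radon)
       (auto simp: atomless_real_distribution_def)
  have [measurable]: "radon_mean M \<in> borel_measurable borel"
    unfolding radon_mean_eq[abs_def] by (intro borel_measurable_continuous_onI continuous_intros)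
  have [measurable]: "radon_var M \<in> borel_measurable borel"
    by (intro borel_measurable_continuous_onI continuous_on_radon_var)
  show ?thesis unfolding NRCDT_eq_cdt_radon[OF assms, abs_def] by measurable
qed

end

locale nondegenerate_distribution = compactly_supported_distribution +
  assumes support_not_in_line: "\<not> (\<exists>L. is_line L \<and> mu_support M \<subseteq> L)"
begin

lemma radon_var_pos:
  assumes "\<theta> \<noteq> 0"
  shows "0 < radon_var M \<theta>"
proof (rule ccontr)
  have int: "integrable M (\<lambda>x. ((x - barycenter) \<bullet> \<theta>)\<^sup>2)"
    by (intro integrable_continuous continuous_intros)
  assume "\<not> 0 < radon_var M \<theta>"
  moreover have "0 \<le> radon_var M \<theta>" unfolding radon_var_eq by simp
  ultimately have "(\<integral>x. ((x - barycenter) \<bullet> \<theta>)\<^sup>2 \<partial>M) = 0" unfolding radon_var_eq by simp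
  then have "AE x in M. x \<in> {x. (x - barycenter) \<bullet> \<theta> = 0}"
    using integral_nonneg_eq_0_iff_AE[OF int] by simp
  moreover have "closed {x. (x - barycenter) \<bullet> \<theta> = 0}"
    by (intro closed_Collect_eq continuous_intros)
  ultimately have "mu_support M \<subseteq> {x. (x - barycenter) \<bullet> \<theta> = 0}"
    by (intro mu_support_subset_closed sets_eq_borel)
  then show False using support_not_in_line orthogonal_complement_is_line[OF \<open>\<theta> \<noteq> 0\<close>] by blast
qed

lemma radon_var_lower_bound:
  obtains \<sigma> where "\<sigma> > 0" "\<And>\<theta>. norm \<theta> = 1 \<Longrightarrow> \<sigma> \<le> radon_var M \<theta>"
proof -
  have "\<exists>\<theta>0\<in>sphere (0::real^2) 1. \<forall>\<theta>\<in>sphere 0 1. radon_var M \<theta>0 \<le> radon_var M \<theta>"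
    by (rule continuous_attains_inf[OF compact_sphere _ continuous_on_radon_var]) simp
  then obtain \<theta>0 where "norm \<theta>0 = 1" and min: "\<And>\<theta>. norm \<theta> = 1 \<Longrightarrow> radon_var M \<theta>0 \<le> radon_var M \<theta>"
    by auto
  then have "0 < radon_var M \<theta>0" by (intro radon_var_pos) auto
  then show ?thesis using min by (rule that)
qed

lemma NRCDT_bounded_on_sphere:
  assumes "atomless_real_distribution \<rho>"
  obtains B where "\<And>t \<theta>. norm \<theta> = 1 \<Longrightarrow> \<bar>NRCDT \<rho> M t \<theta>\<bar> \<le> B"
proof -
  obtain R where R: "AE x in M. norm x \<le> R" using AE_norm_bounded by blast
  obtain \<sigma> where \<sigma>: "\<sigma> > 0" "\<And>\<theta>. norm \<theta> = 1 \<Longrightarrow> \<sigma> \<le> radon_var M \<theta>"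
    using radon_var_lower_bound by blast
  define K where "K = max R \<bar>Inf {}\<bar> + norm barycenter"
  have "\<bar>NRCDT \<rho> M t \<theta>\<bar> \<le> K / sqrt \<sigma>" if "norm \<theta> = 1" for t \<theta>
  proof -
    interpret radon: bounded_real_distribution "radon \<theta> M" "R * norm \<theta>" using R by (rule bounded_real_distribution_radon)
    have "\<bar>cdt \<rho> (radon \<theta> M) t\<bar> \<le> max R \<bar>Inf {}\<bar>"
      unfolding cdt_def using radon.abs_gen_inv_le real_distribution.cdf_bounds(1)[of \<rho>] assms that
      by (simp add: atomless_real_distribution_def)
    moreover have "\<bar>radon_mean M \<theta>\<bar> \<le> norm barycenter"
      unfolding radon_mean_eq using Cauchy_Schwarz_ineq2[of barycenter \<theta>] that by simp
    ultimately have "\<bar>cdt \<rho> (radon \<theta> M) t - radon_mean M \<theta>\<bar> \<le> K" unfolding K_def by linarith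
    moreover have "sqrt \<sigma> \<le> sqrt (radon_var M \<theta>)" using \<sigma>(2)[OF that] by simp
    ultimately show ?thesis
      unfolding NRCDT_eq_cdt_radon[OF assms(1)] abs_divide using \<sigma>(1)
      by (intro frac_le) auto
  qed
  then show ?thesis by (rule that)
qed

lemma NRCDT_in_Linf_S1_uniformly:
  assumes "atomless_real_distribution \<rho>"
  obtains B where "\<And>t. NRCDT \<rho> M t \<in> Linf_S1" "\<And>t. ess_norm circle_measure (NRCDT \<rho> M t) \<le> B"
proof -
  obtain B where B: "\<And>t \<theta>. norm \<theta> = 1 \<Longrightarrow> \<bar>NRCDT \<rho> M t \<theta>\<bar> \<le> B"
    using NRCDT_bounded_on_sphere[OF assms] by blast
  have AE_B: "AE \<theta> in circle_measure. \<bar>NRCDT \<rho> M t \<theta>\<bar> \<le> B" for t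
    using AE_circle_measure_norm by (rule eventually_mono) (rule B)
  have "NRCDT \<rho> M t \<in> Linf_S1" for t
    using borel_measurable_NRCDT[OF assms(1)] AE_B unfolding Linf_S1_def ess_bounded_def
    by (auto simp: circle_measure_def)
  moreover have "ess_norm circle_measure (NRCDT \<rho> M t) \<le> B" for t
    unfolding ess_norm_def
  proof (rule cInf_lower)
    have "0 \<le> B" using B[of "axis 1 1" t] by simp
    then show "B \<in> {C. 0 \<le> C \<and> (AE x in circle_measure. \<bar>NRCDT \<rho> M t x\<bar> \<le> C)}" using AE_B by simp
  qed (auto intro: bdd_belowI[of _ 0])
  ultimately show ?thesis by (rule that)
qed

lemma NRCDT_h_in_Linf_rho:
  assumes "atomless_real_distribution \<rho>" "admissible_h h"
  shows "NRCDT_h h \<rho> M \<in> Linf_rho \<rho>"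
proof -
  obtain B where "\<And>t. NRCDT \<rho> M t \<in> Linf_S1" "\<And>t. ess_norm circle_measure (NRCDT \<rho> M t) \<le> B"
    using NRCDT_in_Linf_S1_uniformly[OF assms(1)] by blast
  then have "bounded (h ` range (NRCDT \<rho> M))"
    using assms(2) unfolding admissible_h_def by (metis (no_types, lifting) image_subsetI rangeE)
  then obtain K where "\<And>t. \<bar>NRCDT_h h \<rho> M t\<bar> \<le> K"
    unfolding bounded_iff NRCDT_h_def by auto
  then show ?thesis unfolding Linf_rho_def ess_bounded_def by auto
qed

end

lemma Pcstar_iff_nondegenerate: "\<mu> \<in> Pcstar \<longleftrightarrow> nondegenerate_distribution \<mu>"
  unfolding Pcstar_def nondegenerate_distribution_def nondegenerate_distribution_axioms_def
    compactly_supported_distribution_def compactly_supported_distribution_axioms_def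
  by blast

lemma (in nondegenerate_distribution) nondegenerate_affine_push:
  assumes A: "invertible A"
  shows "nondegenerate_distribution (affine_push A y M)"
proof -
  obtain B c where "invertible B" and BA: "\<And>x. B *v (A *v x + y) + c = x"
    and "\<And>z. A *v (B *v z + c) + y = z"
    using invertible_affine_inverse[OF A, of y] by blast
  have supp: "mu_support (affine_push A y M) = (\<lambda>x. A *v x + y) ` mu_support M"
    by (rule mu_support_affine_push[OF sets_eq_borel A])
  have "\<not> is_line L" if "mu_support (affine_push A y M) \<subseteq> L" for L
  proof
    assume "is_line L"
    then have "is_line ((\<lambda>z. B *v z + c) ` L)" by (rule is_line_affine_image[OF \<open>invertible B\<close>])
    moreover have "mu_support M \<subseteq> (\<lambda>z. B *v z + c) ` L"
    proof
      fix x assume "x \<in> mu_support M"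
      then have "A *v x + y \<in> L" using that supp by blast
      then show "x \<in> (\<lambda>z. B *v z + c) ` L"
        by (rule image_eqI[where f = "\<lambda>z. B *v z + c", OF BA[symmetric]])
    qed
    ultimately show False using support_not_in_line by blast
  qed
  moreover note prob_space_affine_push
  moreover have "compact (mu_support (affine_push A y M))"
    unfolding supp by (intro compact_continuous_image continuous_on_affine_matrix compact_support)
  moreover have "sets (affine_push A y M) = sets borel" by (simp add: affine_push_def)
  ultimately show ?thesis
    unfolding nondegenerate_distribution_def nondegenerate_distribution_axioms_def
      compactly_supported_distribution_def compactly_supported_distribution_axioms_def
    by blast
qed

section \<open>Affine invariance\<close>

context compactly_supported_distribution
begin

lemma radon_affine_push:
  "radon \<theta> (affine_push A y M) =
     distr (radon (phiA A \<theta>) M) borel (\<lambda>s. norm (transpose A *v \<theta>) * s + y \<bullet> \<theta>)"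
proof -
  have "(A *v x + y) \<bullet> \<theta> = norm (transpose A *v \<theta>) * (x \<bullet> phiA A \<theta>) + y \<bullet> \<theta>" for x
    by (cases "transpose A *v \<theta> = 0") (simp_all add: phiA_def inner_add_left inner_matrix_vector_mult)
  moreover have "(\<lambda>x. A *v x + y) \<in> borel_measurable borel"
    by (intro borel_measurable_continuous_onI continuous_on_affine_matrix)
  moreover have "(\<lambda>x. x \<bullet> v) \<in> borel_measurable borel" for v :: "real^2"
    by (intro borel_measurable_continuous_onI continuous_intros)
  ultimately show ?thesis
    unfolding radon_def affine_push_def by (simp add: distr_distr o_def)
qed

text \<open>The hypothesis \<open>cdf \<rho> t < 1\<close> excludes the junk value \<open>Inf {}\<close> of the transform, which is not
  affine equivariant; it holds for \<open>\<rho>\<close>-almost every \<open>t\<close> (\<open>AE_cdf_less_1\<close>).\<close>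
lemma NRCDT_affine_push:
  assumes \<rho>: "atomless_real_distribution \<rho>" and A: "invertible A" and t: "cdf \<rho> t < 1"
  shows "NRCDT \<rho> (affine_push A y M) t = NRCDT \<rho> M t \<circ> phiA A"
proof
  fix \<theta> :: "real^2"
  show "NRCDT \<rho> (affine_push A y M) t \<theta> = (NRCDT \<rho> M t \<circ> phiA A) \<theta>"
  proof (cases "\<theta> = 0")
    case True
    have "radon 0 (affine_push A y M) = radon 0 M"
      unfolding radon_def by (simp add: prob_space.distr_const[OF prob_space_affine_push] prob_space_axioms)
    then show ?thesis using True by (simp add: NRCDT_def phiA_def)
  next
    case False
    then have c: "norm (transpose A *v \<theta>) > 0"
      using invertible_mult_vec_eq_0_iff[OF transpose_invertible[OF A]] by simp
    obtain R where "AE x in M. norm x \<le> R" using AE_norm_bounded by blast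
    then interpret radon: bounded_real_distribution "radon (phiA A \<theta>) M" "R * norm (phiA A \<theta>)"
      by (rule bounded_real_distribution_radon)
    show ?thesis
      unfolding NRCDT_eq_normalized_cdt radon_affine_push o_def
      using radon.normalized_cdt_affine[OF \<rho> c t] .
  qed
qed

end

context nondegenerate_distribution
begin

lemma NRCDT_h_affine_push_AE:
  assumes \<rho>: "atomless_real_distribution \<rho>" and h: "admissible_h h" and A: "invertible A"
  shows "AE t in \<rho>. NRCDT_h h \<rho> (affine_push A y M) t = NRCDT_h h \<rho> M t"
proof -
  obtain B where "\<And>t. NRCDT \<rho> M t \<in> Linf_S1" using NRCDT_in_Linf_S1_uniformly[OF \<rho>] by blast
  then have invariant: "h (NRCDT \<rho> M t \<circ> phiA A) = h (NRCDT \<rho> M t)" for t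
    using h A unfolding admissible_h_def by blast
  show ?thesis
    using atomless_real_distribution.AE_cdf_less_1[OF \<rho>]
    by (rule eventually_mono) (simp add: NRCDT_h_def NRCDT_affine_push[OF \<rho> A] invariant)
qed

lemma affine_orbit_subset_Pcstar: "{affine_push A y M | A y. invertible A} \<subseteq> Pcstar"
  using nondegenerate_affine_push by (auto simp: Pcstar_iff_nondegenerate)

lemma NRCDT_h_affine_orbit:
  assumes "atomless_real_distribution \<rho>" "admissible_h h"
  shows "NRCDT_h h \<rho> ` {affine_push A y M | A y. invertible A}
           \<subseteq> {f \<in> Linf_rho \<rho>. AE t in \<rho>. f t = NRCDT_h h \<rho> M t}"
  using nondegenerate_distribution.NRCDT_h_in_Linf_rho[OF nondegenerate_affine_push assms]
    NRCDT_h_affine_push_AE[OF assms]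
  by blast

end

theorem theorem12:
  fixes \<rho> :: "real measure"
    and h :: "(real^2 \<Rightarrow> real) \<Rightarrow> real"
    and \<mu>0 \<nu>0 :: "(real^2) measure"
  assumes rho_sets: "sets \<rho> = sets borel"
    and rho_prob: "prob_space \<rho>"
    and rho_no_atoms: "\<And>x. measure \<rho> {x} = 0"
    and h_adm: "admissible_h h"
    and mu0: "\<mu>0 \<in> Pcstar" and nu0: "\<nu>0 \<in> Pcstar"
    and neq: "\<not> (AE t in \<rho>. NRCDT_h h \<rho> \<mu>0 t = NRCDT_h h \<rho> \<nu>0 t)"
  shows "{affine_push A y \<mu>0 | A y. invertible A} \<subseteq> Pcstar
       \<and> {affine_push A y \<nu>0 | A y. invertible A} \<subseteq> Pcstar
       \<and> lin_separable \<rho> (NRCDT_h h \<rho> ` {affine_push A y \<mu>0 | A y. invertible A})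
                         (NRCDT_h h \<rho> ` {affine_push A y \<nu>0 | A y. invertible A})"
proof -
  have \<rho>: "atomless_real_distribution \<rho>"
    using rho_sets rho_prob rho_no_atoms
    by (simp add: atomless_real_distribution_def atomless_real_distribution_axioms_def
        real_distribution_def real_distribution_axioms_def)
  interpret \<mu>0: nondegenerate_distribution \<mu>0 using mu0 by (simp add: Pcstar_iff_nondegenerate)
  interpret \<nu>0: nondegenerate_distribution \<nu>0 using nu0 by (simp add: Pcstar_iff_nondegenerate)
  show ?thesis
    using \<mu>0.affine_orbit_subset_Pcstar \<nu>0.affine_orbit_subset_Pcstar
      lin_separable_if_AE_eq[OF \<mu>0.NRCDT_h_in_Linf_rho[OF \<rho> h_adm] \<nu>0.NRCDT_h_in_Linf_rho[OF \<rho> h_adm]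
        neq \<mu>0.NRCDT_h_affine_orbit[OF \<rho> h_adm] \<nu>0.NRCDT_h_affine_orbit[OF \<rho> h_adm]]
    by blast
qed

end
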